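(* Let $0<q<1/2$, $p=1-q$, $s=4pq$ (so $0<s<1$), and for integers $z\ge1$ let $$P(z)=1-\sum_{k=0}^{z-1}\left(p^zq^k-q^zp^k\right)\binom{k+z-1}{k}.$$ Then as $z\to+\infty$, $$P(z)\sim\frac{s^z}{\sqrt{\pi(1-s)z}}.$$
   Context: $P(z)$ is the probability of success of a double-spend attack by attackers with relative hash power $q$ after $z$ confirmations by the honest miners. The symbol $\sim$ means that the ratio tends to $1$. *)

theory Defs
  imports "HOL-Analysis.Analysis" "HOL-Library.Landau_Symbols"
begin

text \<open>Probability of success of a double-spend attack after z confirmations,
  attacker relative hash power q, p = 1 - q.\<close>
definition attackP :: "real \<Rightarrow> nat \<Rightarrow> real" where
  "attackP q z = 1 - (\<Sum>k<z. ((1 - q) ^ z * q ^ k - q ^ z * (1 - q) ^ k) * real ((k + z - 1) choose k))"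

end

theory Submission
  imports Defs "HOL-Real_Asymp.Real_Asymp"
begin

text \<open>
  With p = 1 - q, the identity between negative-binomial and binomial partial sums turns P(z)
  into twice the binomial tail sum_{k<z} C(2z-1,k) p^k q^(2z-1-k), the probability that the
  honest miners win fewer than z of the first 2z-1 blocks. Summed from its largest term
  k = z-1 downwards, the ratios of the coefficients to the central one C(2z-1,z-1) are bounded
  by 1 and tend to 1 termwise, so by Tannery's theorem the tail is asymptotic to
  C(2z-1,z-1) p^(z-1) q^z / (1 - q/p). The central binomial asymptotics
  C(2n,n) ~ 4^n / sqrt(pi n), read off the Gamma-function asymptotics of (-1/2 gchoose n),
  and sqrt(1 - s) = p - q give the claim.
\<close>

lemma binomial_tails_sum:
  fixes x y :: "'a::comm_semiring_1"
  assumes "m \<le> Suc n"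
  shows "(\<Sum>k<m. of_nat (n choose k) * x ^ k * y ^ (n - k)) +
         (\<Sum>k<Suc n - m. of_nat (n choose k) * y ^ k * x ^ (n - k)) = (x + y) ^ n"
proof -
  have "(\<Sum>k<Suc n - m. of_nat (n choose k) * y ^ k * x ^ (n - k)) =
        (\<Sum>k\<in>{m..n}. of_nat (n choose k) * x ^ k * y ^ (n - k))"
  proof (rule sum.reindex_bij_witness[where i="\<lambda>k. n - k" and j="\<lambda>k. n - k"])
    fix k assume "k \<in> {m..n}"
    then show "n - (n - k) = k" "n - k \<in> {..<Suc n - m}" by auto
  next
    fix k assume k: "k \<in> {..<Suc n - m}"
    then show "n - (n - k) = k" "n - k \<in> {m..n}" using assms by auto
    from k show "of_nat (n choose (n - k)) * x ^ (n - k) * y ^ (n - (n - k)) =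
        of_nat (n choose k) * y ^ k * x ^ (n - k)"
      using assms binomial_symmetric[of k n] by (simp add: mult_ac)
  qed
  moreover have "{..n} = {..<m} \<union> {m..n}" "{..<m} \<inter> {m..n} = {}" using assms by auto
  ultimately show ?thesis
    by (simp add: binomial_ring[of x y n] sum.union_disjoint)
qed

lemma negative_binomial_partial_sum:
  fixes x y :: real
  assumes "x + y = 1" and "z \<ge> 1"
  shows "y ^ z * (\<Sum>k<z. x ^ k * real ((k + z - 1) choose k)) =
         (\<Sum>k<z. real ((2*z - 1) choose k) * x ^ k * y ^ (2*z - 1 - k))"
proof -
  have "(\<Sum>k\<le>z-1. (of_nat (z-1) + of_nat z gchoose k) * x^k * y^(z-1-k)) =
        (\<Sum>k\<le>z-1. (of_nat k + of_nat z - 1 gchoose k) * x^k * (x + y)^(z-1-k))"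
    by (rule gbinomial_partial_sum_poly_xpos)
  moreover have "{..<z} = {..z-1}" using assms by auto
  ultimately have "(\<Sum>k<z. x ^ k * real ((k + z - 1) choose k)) =
        (\<Sum>k<z. real ((2*z - 1) choose k) * x ^ k * y ^ (z - 1 - k))"
    using assms by (simp add: binomial_gbinomial of_nat_diff mult_ac)
  also have "y ^ z * \<dots> = (\<Sum>k<z. real ((2*z - 1) choose k) * x ^ k * y ^ (2*z - 1 - k))"
    unfolding sum_distrib_left
  proof (rule sum.cong[OF refl])
    fix k assume "k \<in> {..<z}"
    then have "2*z - 1 - k = z + (z - 1 - k)" by auto
    then show "y ^ z * (real ((2*z - 1) choose k) * x ^ k * y ^ (z - 1 - k)) =
               real ((2*z - 1) choose k) * x ^ k * y ^ (2*z - 1 - k)"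
      by (simp add: power_add)
  qed
  finally show ?thesis .
qed

lemma central_binomial_Suc: "(2 * Suc m) choose Suc m = 2 * ((2*m+1) choose m)"
  using binomial_Suc_Suc[of "2*m+1" m] binomial_symmetric[of m "2*m+1"] by simp

lemma gbinomial_minus_half:
  "((-1/2::real) gchoose n) = (-1) ^ n * real ((2*n) choose n) / 4 ^ n"
proof -
  have "real ((2*n) choose n) = fact (2*n) / (fact n * fact n)"
    by (simp add: binomial_fact)
  also have "\<dots> = 4 ^ n * pochhammer (1/2) n / fact n"
    by (simp add: fact_double power_mult)
  finally show ?thesis
    by (simp add: gbinomial_pochhammer)
qed

lemma central_binomial_limit:
  "(\<lambda>n. real ((2*n) choose n) * sqrt (pi * real n) / 4 ^ n) \<longlonglongrightarrow> 1"
proof -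
  have "(\<lambda>n. ((-1/2::real) gchoose n) / ((-1) ^ n / exp ((-1/2 + 1) * ln (real n))))
          \<longlonglongrightarrow> 1 / sqrt pi"
    using gbinomial_asymptotic[of "-1/2::real"] by (simp add: Gamma_one_half_real inverse_eq_divide)
  moreover have "eventually (\<lambda>n. ((-1/2::real) gchoose n) / ((-1) ^ n / exp ((-1/2 + 1) * ln (real n)))
                   = real ((2*n) choose n) * sqrt (real n) / 4 ^ n) sequentially"
    using eventually_gt_at_top[of "0::nat"]
  proof eventually_elim
    case (elim n)
    then have "exp ((-1/2 + 1) * ln (real n)) = real n powr (1/2)"
      by (simp add: powr_def)
    then have "exp ((-1/2 + 1) * ln (real n)) = sqrt (real n)"
      by (simp add: powr_half_sqrt)
    then show ?case
      unfolding gbinomial_minus_half by simp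
  qed
  ultimately have "(\<lambda>n. real ((2*n) choose n) * sqrt (real n) / 4 ^ n) \<longlonglongrightarrow> 1 / sqrt pi"
    by (rule Lim_transform_eventually)
  then have "(\<lambda>n. sqrt pi * (real ((2*n) choose n) * sqrt (real n) / 4 ^ n)) \<longlonglongrightarrow> sqrt pi * (1 / sqrt pi)"
    by (intro tendsto_mult tendsto_const)
  then show ?thesis by (simp add: real_sqrt_mult mult_ac)
qed

lemma tannery:
  fixes f :: "nat \<Rightarrow> nat \<Rightarrow> 'a::{banach, second_countable_topology}"
  assumes lim: "\<And>j. (\<lambda>m. f m j) \<longlonglongrightarrow> g j"
    and bound: "\<And>m j. j \<le> m \<Longrightarrow> norm (f m j) \<le> M j"
    and "summable M"
  shows "(\<lambda>m. \<Sum>j\<le>m. f m j) \<longlonglongrightarrow> (\<Sum>j. g j)"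
proof -
  define s where "s m j = (if j \<le> m then f m j else 0)" for m j
  have M_nonneg: "0 \<le> M j" for j
    using bound[of j j] norm_ge_zero order_trans by blast
  have M: "integrable (count_space UNIV) M"
    using \<open>summable M\<close> M_nonneg by (simp add: integrable_count_space_nat_iff)
  have s_lim: "AE j in count_space UNIV. (\<lambda>m. s m j) \<longlonglongrightarrow> g j"
  proof (rule AE_I2)
    fix j
    have "eventually (\<lambda>m. f m j = s m j) sequentially"
      using eventually_ge_at_top[of j] by eventually_elim (simp add: s_def)
    with lim[of j] show "(\<lambda>m. s m j) \<longlonglongrightarrow> g j"
      by (rule Lim_transform_eventually)
  qed
  have s_bound: "AE j in count_space UNIV. norm (s m j) \<le> M j" for m
    using bound M_nonneg by (simp add: s_def)
  have meas: "g \<in> borel_measurable (count_space UNIV)" "s m \<in> borel_measurable (count_space UNIV)" for m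
    by simp_all
  note dominated = meas M s_lim s_bound
  have "(\<lambda>m. integral\<^sup>L (count_space UNIV) (s m)) \<longlonglongrightarrow> (\<Sum>j. g j)"
    using integral_dominated_convergence[OF dominated]
    by (simp add: integral_count_space_nat[OF integrable_dominated_convergence[OF dominated]])
  moreover have "integral\<^sup>L (count_space UNIV) (s m) = (\<Sum>j\<le>m. f m j)" for m
    unfolding integral_count_space_nat[OF integrable_dominated_convergence2[OF dominated]]
    by (subst suminf_finite[of "{..m}"]) (auto simp: s_def)
  ultimately show ?thesis
    by simp
qed

definition central_ratio :: "nat \<Rightarrow> nat \<Rightarrow> real" where
  "central_ratio m j = (\<Prod>i<j. (real m - real i) / (real m + 2 + real i))"

lemma binomial_eq_central_ratio:
  "j \<le> m \<Longrightarrow> real ((2*m+1) choose (m - j)) = real ((2*m+1) choose m) * central_ratio m j"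
proof (induction j)
  case 0
  then show ?case by (simp add: central_ratio_def)
next
  case (Suc j)
  define k where "k = m - Suc j"
  have Suc_k: "Suc k = m - j" using Suc.prems by (simp add: k_def)
  have "(2*m+1 - k) * ((2*m+1) choose k) = (2*m+1) * ((2*m) choose k)"
    using binomial_absorb_comp[of "2*m+1" k] by simp
  also have "\<dots> = (m - j) * ((2*m+1) choose (m - j))"
    using Suc_times_binomial[of k "2*m"] by (simp add: Suc_k)
  finally have "real (2*m+1 - k) * real ((2*m+1) choose k) = real (m - j) * real ((2*m+1) choose (m - j))"
    by (metis of_nat_mult)
  moreover have "real (2*m+1 - k) = real m + 2 + real j" "real (m - j) = real m - real j"
    using Suc.prems by (simp_all add: k_def of_nat_diff)
  ultimately have "(real m + 2 + real j) * real ((2*m+1) choose k) =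
                   (real m - real j) * real ((2*m+1) choose (m - j))"
    by metis
  then have "real ((2*m+1) choose k) =
      real ((2*m+1) choose (m - j)) * ((real m - real j) / (real m + 2 + real j))"
    by (simp add: field_simps add_pos_nonneg)
  also have "\<dots> = real ((2*m+1) choose m) * central_ratio m (Suc j)"
    using Suc by (simp add: central_ratio_def)
  finally show ?case by (simp add: k_def)
qed

lemma central_ratio_bounds:
  assumes "j \<le> m"
  shows "0 \<le> central_ratio m j" and "central_ratio m j \<le> 1"
  using assms unfolding central_ratio_def
  by (auto intro!: prod_nonneg prod_le_1 divide_nonneg_pos)

lemma central_ratio_limit: "(\<lambda>m. central_ratio m j) \<longlonglongrightarrow> 1"
proof -
  have "(\<lambda>m. \<Prod>i<j. (real m - real i) / (real m + 2 + real i)) \<longlonglongrightarrow> (\<Prod>i<j. 1)"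
    by (intro tendsto_prod) real_asymp
  then show ?thesis by (simp add: central_ratio_def)
qed

lemma central_ratio_geometric_limit:
  fixes r :: real
  assumes "0 \<le> r" "r < 1"
  shows "(\<lambda>m. \<Sum>j\<le>m. central_ratio m j * r ^ j) \<longlonglongrightarrow> 1 / (1 - r)"
proof -
  have "(\<lambda>m. \<Sum>j\<le>m. central_ratio m j * r ^ j) \<longlonglongrightarrow> (\<Sum>j. r ^ j)"
  proof (rule tannery)
    show "(\<lambda>m. central_ratio m j * r ^ j) \<longlonglongrightarrow> r ^ j" for j
      using tendsto_mult[OF central_ratio_limit tendsto_const, of j "r ^ j"] by simp
    show "norm (central_ratio m j * r ^ j) \<le> r ^ j" if "j \<le> m" for m j
      using central_ratio_bounds[OF that] assms by (simp add: abs_mult mult_left_le_one_le)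
    show "summable (\<lambda>j. r ^ j)"
      using assms by (simp add: summable_geometric)
  qed
  then show ?thesis
    using assms by (simp add: suminf_geometric)
qed

lemma binomial_lower_tail_from_centre:
  fixes p q :: real
  assumes "p \<noteq> 0"
  shows "(\<Sum>k\<le>m. real ((2*m+1) choose k) * p ^ k * q ^ (2*m+1 - k)) =
         real ((2*m+1) choose m) * p ^ m * q ^ (m+1) * (\<Sum>j\<le>m. central_ratio m j * (q/p) ^ j)"
proof -
  have "(\<Sum>k\<le>m. real ((2*m+1) choose k) * p ^ k * q ^ (2*m+1 - k)) =
        (\<Sum>j\<le>m. real ((2*m+1) choose (m - j)) * p ^ (m - j) * q ^ (2*m+1 - (m - j)))"
    by (rule sum.reindex_bij_witness[where i="\<lambda>k. m - k" and j="\<lambda>k. m - k"]) auto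
  also have "\<dots> = (\<Sum>j\<le>m. real ((2*m+1) choose m) * p ^ m * q ^ (m+1) * (central_ratio m j * (q/p) ^ j))"
  proof (rule sum.cong[OF refl])
    fix j assume "j \<in> {..m}"
    then have "j \<le> m" by simp
    then have "2*m+1 - (m - j) = (m+1) + j" and "p ^ m = p ^ (m - j) * p ^ j"
      by (simp_all add: power_add[symmetric])
    then show "real ((2*m+1) choose (m - j)) * p ^ (m - j) * q ^ (2*m+1 - (m - j)) =
          real ((2*m+1) choose m) * p ^ m * q ^ (m+1) * (central_ratio m j * (q/p) ^ j)"
      unfolding binomial_eq_central_ratio[OF \<open>j \<le> m\<close>] power_add using assms
      by (simp add: power_divide power_add field_simps)
  qed
  finally show ?thesis
    by (simp add: sum_distrib_left)
qed

lemma attackP_eq_twice_binomial_tail: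
  assumes "z \<ge> 1"
  shows "attackP q z = 2 * (\<Sum>k<z. real ((2*z - 1) choose k) * (1 - q) ^ k * q ^ (2*z - 1 - k))"
proof -
  define p where "p = 1 - q"
  define n where "n = 2*z - 1"
  have pq: "p + q = 1" "q + p = 1" by (simp_all add: p_def)
  have attacker: "p ^ z * (\<Sum>k<z. q ^ k * real ((k + z - 1) choose k)) =
                  (\<Sum>k<z. real (n choose k) * q ^ k * p ^ (n - k))"
    using negative_binomial_partial_sum[OF pq(2) assms] by (simp add: n_def)
  have honest: "q ^ z * (\<Sum>k<z. p ^ k * real ((k + z - 1) choose k)) =
                (\<Sum>k<z. real (n choose k) * p ^ k * q ^ (n - k))"
    using negative_binomial_partial_sum[OF pq(1) assms] by (simp add: n_def)
  have "(\<Sum>k<z. real (n choose k) * q ^ k * p ^ (n - k)) +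
        (\<Sum>k<z. real (n choose k) * p ^ k * q ^ (n - k)) = 1"
    using binomial_tails_sum[of z n q p] assms pq by (simp add: n_def)
  moreover have "attackP q z = 1 - p ^ z * (\<Sum>k<z. q ^ k * real ((k + z - 1) choose k))
                                 + q ^ z * (\<Sum>k<z. p ^ k * real ((k + z - 1) choose k))"
    unfolding attackP_def p_def by (simp add: sum_subtractf sum_distrib_left algebra_simps)
  ultimately show ?thesis
    unfolding attacker honest by (simp add: p_def n_def)
qed

lemma attackP_Suc:
  assumes "q \<noteq> 1"
  shows "attackP q (Suc m) = real ((2 * Suc m) choose Suc m) * (1 - q) ^ m * q ^ (m+1) *
           (\<Sum>j\<le>m. central_ratio m j * (q / (1 - q)) ^ j)"
proof -
  have "attackP q (Suc m) = 2 * (\<Sum>k\<le>m. real ((2*m+1) choose k) * (1 - q) ^ k * q ^ (2*m+1 - k))"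
    using attackP_eq_twice_binomial_tail[of "Suc m" q] by (simp add: lessThan_Suc_atMost)
  also have "\<dots> = 2 * real ((2*m+1) choose m) * (1 - q) ^ m * q ^ (m+1) *
                    (\<Sum>j\<le>m. central_ratio m j * (q / (1 - q)) ^ j)"
    using binomial_lower_tail_from_centre[of "1 - q" m q] assms by simp
  finally show ?thesis
    unfolding central_binomial_Suc by simp
qed

lemma attackP_Suc_ratio:
  assumes "0 < q" and "q < 1/2"
  shows "attackP q (Suc m) /
           ((4 * (1 - q) * q) ^ Suc m / sqrt (pi * (1 - 4 * (1 - q) * q) * real (Suc m))) =
         real ((2 * Suc m) choose Suc m) * sqrt (pi * real (Suc m)) / 4 ^ Suc m *
           (\<Sum>j\<le>m. central_ratio m j * (q / (1 - q)) ^ j) * ((1 - 2 * q) / (1 - q))"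
proof -
  define p where "p = 1 - q"
  define C where "C = real ((2 * Suc m) choose Suc m)"
  define S where "S = (\<Sum>j\<le>m. central_ratio m j * (q / p) ^ j)"
  define R where "R = sqrt (pi * real (Suc m))"
  have "0 < p" "q < p" using assms by (auto simp: p_def)
  have "1 - 4 * (1 - q) * q = (p - q)\<^sup>2"
    by (simp add: p_def power2_eq_square algebra_simps)
  then have sqrt_eq: "sqrt (pi * (1 - 4 * (1 - q) * q) * real (Suc m)) = (p - q) * R"
    using \<open>q < p\<close> by (simp add: R_def real_sqrt_mult)
  have power_eq: "(4 * (1 - q) * q) ^ Suc m = 4 ^ Suc m * p * p ^ m * q ^ (m+1)"
    unfolding p_def[symmetric] power_mult_distrib by (simp add: mult_ac)
  have "1 - 2 * q = p - q" by (simp add: p_def)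
  have "attackP q (Suc m) = C * p ^ m * q ^ (m+1) * S"
    using attackP_Suc[of q m] assms by (simp add: C_def S_def p_def)
  moreover have "R > 0" by (simp add: R_def)
  ultimately show ?thesis
    unfolding sqrt_eq power_eq \<open>1 - 2 * q = p - q\<close>
    unfolding C_def[symmetric] R_def[symmetric] p_def[symmetric] S_def[symmetric]
    using assms \<open>0 < p\<close> \<open>q < p\<close> by (simp add: field_simps)
qed

theorem mainTheorem4:
  fixes q :: real
  assumes "0 < q" and "q < 1/2"
  shows "(\<lambda>z. attackP q z) \<sim>[at_top]
         (\<lambda>z. (4 * (1 - q) * q) ^ z / sqrt (pi * (1 - 4 * (1 - q) * q) * real z))"
proof (rule asymp_equivI')
  have r: "0 \<le> q / (1 - q)" "q / (1 - q) < 1"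
    using assms by (simp_all add: field_simps)
  have "(\<lambda>m. real ((2 * Suc m) choose Suc m) * sqrt (pi * real (Suc m)) / 4 ^ Suc m *
            (\<Sum>j\<le>m. central_ratio m j * (q / (1 - q)) ^ j) * ((1 - 2 * q) / (1 - q)))
          \<longlonglongrightarrow> 1 * (1 / (1 - q / (1 - q))) * ((1 - 2 * q) / (1 - q))"
    by (intro tendsto_mult tendsto_const LIMSEQ_Suc[OF central_binomial_limit]
        central_ratio_geometric_limit[OF r])
  also have "1 - q / (1 - q) = (1 - 2 * q) / (1 - q)"
    using assms by (simp add: field_simps)
  then have "1 * (1 / (1 - q / (1 - q))) * ((1 - 2 * q) / (1 - q)) = 1"
    using assms by simp
  finally show "((\<lambda>z. attackP q z / ((4 * (1 - q) * q) ^ z / sqrt (pi * (1 - 4 * (1 - q) * q) * real z)))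
                  \<longlongrightarrow> 1) at_top"
    unfolding attackP_Suc_ratio[OF assms, symmetric] by (rule LIMSEQ_imp_Suc)
qed

end
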